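(* Let $d\ge 1$ be an integer and let $\mathcal{P}$ be the set of all (nonempty) integer partitions. As formal power series, $$\sum_{\lambda\in\mathcal{P}}t^{\mathrm{mod}_d(\lambda)}x^{\ell(\lambda)}y^{\lambda_1}=\frac{txy(1-x)^d+\frac{xy}{x+y-1}\left(y^{d+1}-y(1-x)^d\right)}{(1-tx)(1-x)^d-y^{d+1}}.$$ In particular, $$\sum_{\lambda\in\mathcal{P}}t^{\mathrm{mod}'_d(\lambda)}x^{\Gamma(\lambda)}=\frac{x\left(tx^{d+1}+(1-tx)^d(x-1)\right)}{(1-x-tx)\left((1-tx)^d(x-1)+x^{d+1}\right)}.$$
   Context: A partition is a finite nonempty weakly decreasing sequence $\lambda=(\lambda_1,\ldots,\lambda_k)$ of positive integers; $\ell(\lambda)=k$ and $\lambda_1$ is the largest part. The perimeter is $\Gamma(\lambda)=\lambda_1+\ell(\lambda)-1$. $\mathrm{mod}_d(\lambda)=|\{i:\lambda_i\equiv 1\pmod{d+1}\}|$ and $\mathrm{mod}'_d(\lambda)=\ell(\lambda)-\mathrm{mod}_d(\lambda)$ (the number of parts not congruent to $1$ modulo $d+1$). *)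

theory Defs
  imports "HOL-Computational_Algebra.Formal_Power_Series"
begin

definition partition :: "nat list \<Rightarrow> bool" where
  "partition l \<longleftrightarrow> l \<noteq> [] \<and> sorted_wrt (\<ge>) l \<and> (\<forall>p\<in>set l. 0 < p)"

definition largest :: "nat list \<Rightarrow> nat" where "largest l = hd l"

definition perim :: "nat list \<Rightarrow> nat" where "perim l = largest l + length l - 1"

definition modd :: "nat \<Rightarrow> nat list \<Rightarrow> nat" where
  "modd d l = length (filter (\<lambda>p. p mod (d+1) = 1 mod (d+1)) l)"
definition modd' :: "nat \<Rightarrow> nat list \<Rightarrow> nat" where
  "modd' d l = length l - modd d l"

text \<open>Trivariate power series in t,x,y: int fps fps fps, outer variable y,
  middle x, inner t.  Coefficient of y^k x^j t^i is F $ k $ j $ i.\<close>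
definition Tv :: "int fps fps fps" where "Tv = fps_const (fps_const fps_X)"
definition Xv :: "int fps fps fps" where "Xv = fps_const fps_X"
definition Yv :: "int fps fps fps" where "Yv = fps_X"

definition GF3 :: "nat \<Rightarrow> int fps fps fps" where
  "GF3 d = Abs_fps (\<lambda>k. Abs_fps (\<lambda>j. Abs_fps (\<lambda>i.
     int (card {l. partition l \<and> largest l = k \<and> length l = j \<and> modd d l = i}))))"

text \<open>Bivariate power series in t,x: int fps fps, outer variable x, inner t.\<close>
definition T2 :: "int fps fps" where "T2 = fps_const fps_X"
definition X2 :: "int fps fps" where "X2 = fps_X"

definition GF2 :: "nat \<Rightarrow> int fps fps" where
  "GF2 d = Abs_fps (\<lambda>n. Abs_fps (\<lambda>i.
     int (card {l. partition l \<and> perim l = n \<and> modd' d l = i})))"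

end

theory Submission
  imports Defs
begin

(*
  Mark the parts congruent to 1 mod d+1. For k >= 0 let A_k(x, t) be the generating function
  of the (possibly empty) partitions with all parts <= k, where x counts parts and t marked
  parts. Splitting off the largest part gives A_k = A_{k-1} + t^[k marked] x A_k, hence
  A_k = prod_{m <= k} 1 / (1 - t^[m marked] x); the partitions with largest part exactly k
  contribute A_k - A_{k-1}, so the trivariate series equals (1 - y) G - 1 for
  G = sum_k A_k y^k. Since the marking is periodic, A_{k+d+1} Q = A_k for the product
  Q = (1 - t x) (1 - x)^d of one period of factors, and A_k Q = (1 - x)^(d+1-k) for
  1 <= k <= d+1. Thus G (Q - y^(d+1)) is a polynomial in y whose non-constant part is a
  geometric sum, which yields the first identity. Marking the complementary parts instead and
  substituting y := x (the perimeter plus one is lambda_1 + l(lambda)) yields the second.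
*)

unbundle fps_syntax

lemma prod_lessThan_periodic:
  fixes f :: "nat \<Rightarrow> 'a::comm_monoid_mult"
  assumes "\<And>m. f (m + p) = f m"
  shows "(\<Prod>m<p. f (k + m)) = (\<Prod>m<p. f m)"
proof (induction k)
  case (Suc k)
  show ?case
  proof (cases p)
    case (Suc n)
    have "(\<Prod>m<p. f (Suc k + m)) = (\<Prod>m<n. f (k + Suc m)) * f (k + p)"
      using Suc by (simp add: prod.lessThan_Suc add.commute add.left_commute)
    also have "\<dots> = f k * (\<Prod>m<n. f (k + Suc m))"
      using assms[of k] by (simp add: mult.commute)
    also have "\<dots> = (\<Prod>m<p. f (k + m))"
      unfolding Suc prod.lessThan_Suc_shift by simp
    finally show ?thesis using \<open>(\<Prod>m<p. f (k + m)) = (\<Prod>m<p. f m)\<close> by simp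
  qed simp
qed simp

lemma fps_nth_sum_X_power:
  assumes "finite A"
  shows "(\<Sum>a\<in>A. fps_X ^ f a) $ i = (of_nat (card {a\<in>A. f a = i}) :: 'b::comm_semiring_1)"
proof -
  have "(\<Sum>a\<in>A. fps_X ^ f a) $ i = (\<Sum>a\<in>A. if f a = i then 1 else (0::'b))"
    by (simp add: fps_sum_nth eq_commute)
  also have "\<dots> = of_nat (card {a\<in>A. f a = i})"
    using assms by (simp add: sum.If_cases Int_def conj_commute)
  finally show ?thesis .
qed

(* For F = sum F_kj y^k x^j this is F(z, z). *)
definition fps_flatten :: "'a::comm_ring_1 fps fps \<Rightarrow> 'a fps" where
  "fps_flatten F = Abs_fps (\<lambda>n. \<Sum>k\<le>n. F $ k $ (n - k))"

lemma fps_flatten_nth: "fps_flatten F $ n = (\<Sum>k\<le>n. F $ k $ (n - k))"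
  by (simp add: fps_flatten_def)

lemma fps_flatten_add: "fps_flatten (F + G) = fps_flatten F + fps_flatten G"
  by (rule fps_ext) (simp add: fps_flatten_nth sum.distrib)

lemma fps_flatten_diff: "fps_flatten (F - G) = fps_flatten F - fps_flatten G"
  by (rule fps_ext) (simp add: fps_flatten_nth sum_subtractf)

lemma fps_flatten_const: "fps_flatten (fps_const c) = c"
  by (rule fps_ext) (simp add: fps_flatten_nth atMost_atLeast0 sum.atLeast_Suc_atMost)

lemma fps_flatten_one: "fps_flatten 1 = 1"
  using fps_flatten_const[of 1] by simp

lemma fps_flatten_X: "fps_flatten fps_X = fps_X"
proof (rule fps_ext)
  fix n
  have "fps_flatten fps_X $ n = (\<Sum>k\<le>n. if k = 1 then (1 :: 'a fps) $ (n - 1) else 0)"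
    unfolding fps_flatten_nth by (rule sum.cong) auto
  then show "fps_flatten fps_X $ n = (fps_X :: 'a fps) $ n"
    by (cases n) auto
qed

lemma fps_flatten_mult: "fps_flatten (F * G) = fps_flatten F * fps_flatten G"
proof (rule fps_ext)
  fix n
  \<comment> \<open>Both sides are the sum of \<open>F $ i $ j * G $ b $ e\<close> over \<open>i + j + b + e = n\<close>.\<close>
  define Q where "Q = {(i, j, b, e). i + j + b + e = (n::nat)}"
  define g where "g = (\<lambda>(i, j, b, e). F $ i $ j * G $ b $ e)"
  have "fps_flatten (F * G) $ n
      = (\<Sum>(k, i, j)\<in>(SIGMA k:{..n}. SIGMA i:{0..k}. {0..n-k}).
           F $ i $ j * G $ (k-i) $ (n-k-j))"
    by (simp add: fps_flatten_nth fps_mult_nth fps_sum_nth sum.Sigma)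
  also have "\<dots> = sum g Q"
    by (rule sum.reindex_bij_witness[where i="\<lambda>(i, j, b, e). (i + b, i, j)"
          and j="\<lambda>(k, i, j). (i, j, k - i, n - k - j)"]) (auto simp: Q_def g_def)
  also have "\<dots> = (\<Sum>(m, a, b)\<in>(SIGMA m:{0..n}. SIGMA a:{..m}. {..n-m}).
           F $ a $ (m-a) * G $ b $ (n-m-b))"
    by (rule sum.reindex_bij_witness[where i="\<lambda>(m, a, b). (a, m - a, b, n - m - b)"
          and j="\<lambda>(i, j, b, e). (i + j, i, b)"]) (auto simp: Q_def g_def)
  also have "\<dots> = (fps_flatten F * fps_flatten G) $ n"
    by (simp add: fps_flatten_nth fps_mult_nth sum_product sum.Sigma)
  finally show "fps_flatten (F * G) $ n = (fps_flatten F * fps_flatten G) $ n" .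
qed

lemma fps_flatten_power: "fps_flatten (F ^ k) = fps_flatten F ^ k"
  by (induction k) (simp_all add: fps_flatten_one fps_flatten_mult)

definition decr_lists :: "nat \<Rightarrow> nat \<Rightarrow> nat list set" where
  "decr_lists k j = {l. sorted_wrt (\<ge>) l \<and> set l \<subseteq> {1..k} \<and> length l = j}"

definition partitions_largest_length :: "nat \<Rightarrow> nat \<Rightarrow> nat list set" where
  "partitions_largest_length k j = {l. partition l \<and> largest l = k \<and> length l = j}"

lemma partition_le_largest: "partition l \<Longrightarrow> p \<in> set l \<Longrightarrow> p \<le> largest l"
  by (cases l) (auto simp: partition_def largest_def)

lemma partition_largest_length_pos: "partition l \<Longrightarrow> 0 < largest l \<and> 0 < length l"
  by (cases l) (auto simp: partition_def largest_def)

lemma finite_decr_lists: "finite (decr_lists k j)"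
  by (rule finite_subset[OF _ finite_lists_length_eq[of "{1..k}" j]]) (auto simp: decr_lists_def)

lemma decr_lists_0_right: "decr_lists k 0 = {[]}"
  by (auto simp: decr_lists_def)

lemma decr_lists_0_left: "decr_lists 0 j = (if j = 0 then {[]} else {})"
  by (auto simp: decr_lists_def)

lemma partitions_largest_length_subset: "partitions_largest_length k j \<subseteq> decr_lists k j"
  by (auto simp: partitions_largest_length_def decr_lists_def Suc_le_eq partition_le_largest)
     (auto simp: partition_def)

lemma finite_partitions_largest_length: "finite (partitions_largest_length k j)"
  using finite_subset[OF partitions_largest_length_subset finite_decr_lists] .

lemma partitions_largest_length_0_right: "partitions_largest_length k 0 = {}"
  by (auto simp: partitions_largest_length_def partition_def)

lemma partitions_largest_length_0_left: "partitions_largest_length 0 j = {}"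
  by (auto simp: partitions_largest_length_def partition_def largest_def neq_Nil_conv)

lemma decr_lists_Suc:
  "decr_lists (Suc k) j = decr_lists k j \<union> partitions_largest_length (Suc k) j"
proof (intro equalityI subsetI)
  fix l assume l: "l \<in> decr_lists (Suc k) j"
  show "l \<in> decr_lists k j \<union> partitions_largest_length (Suc k) j"
  proof (cases l)
    case (Cons p r)
    with l show ?thesis
      by (cases "p = Suc k")
        (force simp: decr_lists_def partitions_largest_length_def partition_def largest_def)+
  qed (use l in \<open>simp add: decr_lists_def\<close>)
next
  fix l assume "l \<in> decr_lists k j \<union> partitions_largest_length (Suc k) j"
  then show "l \<in> decr_lists (Suc k) j"
    using partitions_largest_length_subset by (auto simp: decr_lists_def)
qed

lemma decr_lists_disjoint: "decr_lists k j \<inter> partitions_largest_length (Suc k) j = {}"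
  by (auto simp: decr_lists_def partitions_largest_length_def partition_def largest_def neq_Nil_conv)

lemma partitions_largest_length_Suc_Suc:
  "partitions_largest_length (Suc k) (Suc j) = Cons (Suc k) ` decr_lists (Suc k) j"
proof (intro equalityI subsetI)
  fix l assume "l \<in> partitions_largest_length (Suc k) (Suc j)"
  then show "l \<in> Cons (Suc k) ` decr_lists (Suc k) j"
    by (cases l) (auto simp: partitions_largest_length_def decr_lists_def partition_def largest_def
        Suc_le_eq intro!: imageI)
qed (auto simp: partitions_largest_length_def decr_lists_def partition_def largest_def subset_iff)

definition euler_factor :: "(nat \<Rightarrow> bool) \<Rightarrow> nat \<Rightarrow> int fps fps" where
  "euler_factor M m = 1 - fps_const (if M m then fps_X else 1) * fps_X"

definition gf_decr :: "(nat \<Rightarrow> bool) \<Rightarrow> nat \<Rightarrow> int fps fps" where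
  "gf_decr M k = Abs_fps (\<lambda>j. \<Sum>l\<in>decr_lists k j. fps_X ^ length (filter M l))"

definition gf_partitions :: "(nat \<Rightarrow> bool) \<Rightarrow> int fps fps fps" where
  "gf_partitions M = Abs_fps (\<lambda>k. Abs_fps (\<lambda>j.
     \<Sum>l\<in>partitions_largest_length k j. fps_X ^ length (filter M l)))"

lemma gf_decr_0: "gf_decr M 0 = 1"
  by (rule fps_ext) (simp add: gf_decr_def decr_lists_0_left)

lemma gf_decr_Suc: "gf_decr M (Suc k) * euler_factor M (Suc k) = gf_decr M k"
proof -
  let ?c = "fps_const (if M (Suc k) then fps_X else 1) :: int fps fps"
  have "gf_decr M (Suc k) = gf_decr M k + fps_X * (?c * gf_decr M (Suc k))"
  proof (rule fps_ext)
    fix j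
    show "gf_decr M (Suc k) $ j = (gf_decr M k + fps_X * (?c * gf_decr M (Suc k))) $ j"
    proof (cases j)
      case 0
      then show ?thesis by (simp add: gf_decr_def decr_lists_0_right)
    next
      case (Suc j')
      have "gf_decr M (Suc k) $ j = gf_decr M k $ j
          + (\<Sum>l\<in>Cons (Suc k) ` decr_lists (Suc k) j'. fps_X ^ length (filter M l))"
        using Suc by (simp add: gf_decr_def decr_lists_Suc decr_lists_disjoint finite_decr_lists
            finite_partitions_largest_length sum.union_disjoint partitions_largest_length_Suc_Suc)
      also have "(\<Sum>l\<in>Cons (Suc k) ` decr_lists (Suc k) j'. fps_X ^ length (filter M l))
          = (if M (Suc k) then fps_X else 1) * gf_decr M (Suc k) $ j'"
        by (simp add: sum.reindex gf_decr_def sum_distrib_left)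
      finally show ?thesis using Suc by simp
    qed
  qed
  then show ?thesis by (simp add: euler_factor_def algebra_simps)
qed

lemma gf_decr_prod: "gf_decr M k = gf_decr M (k + r) * (\<Prod>m<r. euler_factor M (Suc (k + m)))"
proof (induction r)
  case (Suc r)
  then show ?case
    using gf_decr_Suc[of M "k + r"] by (simp add: mult_ac)
qed simp

lemma gf_partitions_eq: "gf_partitions M = (1 - fps_X) * Abs_fps (gf_decr M) - 1"
proof (rule fps_ext)
  fix k
  show "gf_partitions M $ k = ((1 - fps_X) * Abs_fps (gf_decr M) - 1) $ k"
  proof (cases k)
    case 0
    then show ?thesis
      by (simp add: gf_partitions_def partitions_largest_length_0_left gf_decr_0 fps_eq_iff)
  next
    case (Suc k')
    have "gf_partitions M $ k = gf_decr M (Suc k') - gf_decr M k'"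
      by (rule fps_ext) (simp add: Suc gf_partitions_def gf_decr_def decr_lists_Suc
          decr_lists_disjoint finite_decr_lists finite_partitions_largest_length sum.union_disjoint)
    then show ?thesis using Suc by (simp add: algebra_simps)
  qed
qed

context
  fixes M :: "nat \<Rightarrow> bool" and d :: nat and a b :: "int fps fps"
  assumes marks_periodic: "\<And>m. M (m + (d+1)) = M m"
    and euler_factor_1: "euler_factor M 1 = b"
    and euler_factor_block: "\<And>m. m \<in> {2..d+1} \<Longrightarrow> euler_factor M m = a"
begin

lemma prod_euler_factor_period: "(\<Prod>m<d+1. euler_factor M (Suc (k + m))) = b * a ^ d"
proof -
  have "euler_factor M (Suc (m + (d+1))) = euler_factor M (Suc m)" for m
    using marks_periodic[of "Suc m"] by (simp add: euler_factor_def)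
  then have "(\<Prod>m<d+1. euler_factor M (Suc (k + m))) = (\<Prod>m<d+1. euler_factor M (Suc m))"
    by (rule prod_lessThan_periodic[where f = "\<lambda>m. euler_factor M (Suc m)"])
  also have "\<dots> = euler_factor M 1 * (\<Prod>m<d. euler_factor M (Suc (Suc m)))"
    unfolding Suc_eq_plus1[symmetric] prod.lessThan_Suc_shift by simp
  also have "\<dots> = b * a ^ d"
    using euler_factor_1 euler_factor_block by simp
  finally show ?thesis .
qed

lemma gf_decr_period: "gf_decr M (k + (d+1)) * (b * a ^ d) = gf_decr M k"
  using gf_decr_prod[of M k "d+1"] prod_euler_factor_period[of k] by simp

lemma gf_decr_initial:
  assumes "1 \<le> k" "k \<le> d+1"
  shows "gf_decr M k * (b * a ^ d) = a ^ (d+1-k)"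
proof -
  have "(\<Prod>m<d+1-k. euler_factor M (Suc (k + m))) = a ^ (d+1-k)"
    using assms euler_factor_block by simp
  then have "gf_decr M k = gf_decr M (d+1) * a ^ (d+1-k)"
    using gf_decr_prod[of M k "d+1-k"] assms by simp
  then have "gf_decr M k * (b * a ^ d) = (gf_decr M (d+1) * (b * a ^ d)) * a ^ (d+1-k)"
    by (simp only: mult_ac)
  also have "gf_decr M (d+1) * (b * a ^ d) = 1"
    using gf_decr_period[of 0] by (simp add: gf_decr_0)
  finally show ?thesis by simp
qed

lemma gf_decr_series_mult:
  "Abs_fps (gf_decr M) * (fps_const b * fps_const a ^ d - fps_X ^ (d+1))
     = fps_const b * fps_const a ^ d - fps_const a ^ (d+1)
       + fps_const a * (\<Sum>i<d+1. fps_const a ^ (d+1 - Suc i) * fps_X ^ i)"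
proof (rule fps_ext)
  fix k
  have "(Abs_fps (gf_decr M) * (fps_const b * fps_const a ^ d - fps_X ^ (d+1))) $ k
      = gf_decr M k * (b * a ^ d) - (if k < d+1 then 0 else gf_decr M (k - (d+1)))"
    by (auto simp: algebra_simps fps_X_power_mult_right_nth)
  also have "\<dots> = (fps_const b * fps_const a ^ d - fps_const a ^ (d+1)
       + fps_const a * (\<Sum>i<d+1. fps_const a ^ (d+1 - Suc i) * fps_X ^ i)) $ k"
  proof -
    consider "k = 0" | "1 \<le> k" "k \<le> d" | "d+1 \<le> k" by linarith
    then show ?thesis
    proof cases
      case 1
      then show ?thesis by (simp add: gf_decr_0 fps_sum_nth mult_delta_right)
    next
      case 2
      then have "a ^ (d+1-k) = a * a ^ (d-k)" by (simp add: Suc_diff_le)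
      with 2 show ?thesis by (simp add: gf_decr_initial fps_sum_nth mult_delta_right)
    next
      case 3
      then show ?thesis using gf_decr_period[of "k - (d+1)"] by (simp add: fps_sum_nth mult_delta_right)
    qed
  qed
  finally show "(Abs_fps (gf_decr M) * (fps_const b * fps_const a ^ d - fps_X ^ (d+1))) $ k
      = \<dots>" .
qed

lemma gf_partitions_rational:
  "gf_partitions M * ((fps_const b * fps_const a ^ d - fps_X ^ (d+1)) * (fps_X - fps_const a))
     = (1 - fps_X) * ((fps_const b * fps_const a ^ d - fps_const a ^ (d+1)) * (fps_X - fps_const a)
                      + fps_const a * (fps_X ^ (d+1) - fps_const a ^ (d+1)))
       - (fps_const b * fps_const a ^ d - fps_X ^ (d+1)) * (fps_X - fps_const a)"
proof -
  let ?D = "fps_const b * fps_const a ^ d - fps_X ^ (d+1)"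
    and ?E = "fps_X - fps_const a"
    and ?S = "\<Sum>i<d+1. fps_const a ^ (d+1 - Suc i) * fps_X ^ i"
  have "Abs_fps (gf_decr M) * (?D * ?E)
      = (fps_const b * fps_const a ^ d - fps_const a ^ (d+1) + fps_const a * ?S) * ?E"
    by (simp only: gf_decr_series_mult mult.assoc[symmetric])
  also have "\<dots> = (fps_const b * fps_const a ^ d - fps_const a ^ (d+1)) * ?E
      + fps_const a * (?E * ?S)"
    by (simp add: algebra_simps)
  also have "?E * ?S = fps_X ^ (d+1) - fps_const a ^ (d+1)"
    by (rule power_diff_sumr2[symmetric])
  finally have "Abs_fps (gf_decr M) * (?D * ?E)
      = (fps_const b * fps_const a ^ d - fps_const a ^ (d+1)) * ?E
        + fps_const a * (fps_X ^ (d+1) - fps_const a ^ (d+1))" .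
  then show ?thesis
    by (simp only: gf_partitions_eq left_diff_distrib mult.assoc mult_1_left)
qed

end

lemma partitions_perim_eq_UN:
  "{l. partition l \<and> perim l = n} = (\<Union>k\<le>Suc n. partitions_largest_length k (Suc n - k))"
  using partition_largest_length_pos
  by (fastforce simp: partitions_largest_length_def perim_def)

lemma fps_flatten_gf_partitions:
  "fps_flatten (gf_partitions M)
     = fps_X * Abs_fps (\<lambda>n. \<Sum>l | partition l \<and> perim l = n. fps_X ^ length (filter M l))"
proof (rule fps_ext)
  fix n
  show "fps_flatten (gf_partitions M) $ n
      = (fps_X * Abs_fps (\<lambda>n. \<Sum>l | partition l \<and> perim l = n. fps_X ^ length (filter M l))) $ n"
  proof (cases n)
    case 0
    then show ?thesis
      by (simp add: fps_flatten_nth gf_partitions_def partitions_largest_length_0_right)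
  next
    case (Suc n')
    have "fps_flatten (gf_partitions M) $ n = (\<Sum>k\<le>Suc n'.
        \<Sum>l\<in>partitions_largest_length k (Suc n' - k). fps_X ^ length (filter M l))"
      using Suc by (simp add: fps_flatten_nth gf_partitions_def)
    also have "\<dots> = (\<Sum>l | partition l \<and> perim l = n'. fps_X ^ length (filter M l))"
      unfolding partitions_perim_eq_UN
      by (rule sum.UNION_disjoint[symmetric])
        (auto simp: finite_partitions_largest_length, auto simp: partitions_largest_length_def)
    finally show ?thesis using Suc by simp
  qed
qed

lemma GF3_eq_gf_partitions: "GF3 d = gf_partitions (\<lambda>p. p mod (d+1) = 1 mod (d+1))"
  by (intro fps_ext) (simp add: GF3_def gf_partitions_def fps_nth_sum_X_power
      finite_partitions_largest_length, simp add: partitions_largest_length_def modd_def)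

lemma fps_flatten_gf_partitions_GF2:
  "fps_flatten (gf_partitions (\<lambda>p. p mod (d+1) \<noteq> 1 mod (d+1))) = fps_X * GF2 d"
proof -
  have "modd' d l = length (filter (\<lambda>p. p mod (d+1) \<noteq> 1 mod (d+1)) l)" for l
    using sum_length_filter_compl[of "\<lambda>p. p mod (d+1) = 1 mod (d+1)" l]
    by (simp add: modd'_def modd_def)
  moreover have "finite {l. partition l \<and> perim l = n}" for n
    by (simp add: partitions_perim_eq_UN finite_partitions_largest_length)
  ultimately show ?thesis
    unfolding fps_flatten_gf_partitions
    by (intro arg_cong[where f = "\<lambda>F. fps_X * F"] fps_ext)
      (simp add: GF2_def fps_nth_sum_X_power)
qed

lemma mod_period_ne_1:
  fixes m d :: nat
  shows "m \<in> {2..d+1} \<Longrightarrow> m mod (d+1) \<noteq> 1 mod (d+1)"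
  by (cases "m = d+1") auto

lemma GF3_rational:
  "GF3 d * (((1 - Tv * Xv) * (1 - Xv) ^ d - Yv ^ (d+1)) * (Xv + Yv - 1))
     = Tv * Xv * Yv * (1 - Xv) ^ d * (Xv + Yv - 1) + Xv * Yv * (Yv ^ (d+1) - Yv * (1 - Xv) ^ d)"
proof -
  define P where "P = (\<lambda>p. p mod (d+1) = 1 mod (d+1))"
  have periodic: "P (m + (d+1)) = P m" for m
    unfolding P_def by (simp only: mod_add_self2)
  have factor_1: "euler_factor P 1 = 1 - fps_const fps_X * fps_X"
    by (simp add: euler_factor_def P_def)
  have factor_block: "euler_factor P m = 1 - fps_X" if "m \<in> {2..d+1}" for m
    using mod_period_ne_1[OF that] by (simp add: euler_factor_def P_def)
  have "Xv + Yv - 1 = Yv - (1 - Xv)"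
    by simp
  then have "GF3 d * (((1 - Tv * Xv) * (1 - Xv) ^ d - Yv ^ (d+1)) * (Xv + Yv - 1))
      = gf_partitions P * (((1 - Tv * Xv) * (1 - Xv) ^ d - Yv ^ (d+1)) * (Yv - (1 - Xv)))"
    by (simp only: GF3_eq_gf_partitions P_def)
  also have "\<dots> = (1 - Yv) * (((1 - Tv * Xv) * (1 - Xv) ^ d - (1 - Xv) ^ (d+1)) * (Yv - (1 - Xv))
                    + (1 - Xv) * (Yv ^ (d+1) - (1 - Xv) ^ (d+1)))
        - ((1 - Tv * Xv) * (1 - Xv) ^ d - Yv ^ (d+1)) * (Yv - (1 - Xv))"
    using gf_partitions_rational[where M = P and d = d and a = "1 - fps_X"
        and b = "1 - fps_const fps_X * fps_X", OF periodic factor_1 factor_block]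
    by (simp only: Tv_def Xv_def Yv_def fps_const_1_eq_1 flip: fps_const_sub fps_const_mult)
  also have "\<dots> = Tv * Xv * Yv * (1 - Xv) ^ d * (Xv + Yv - 1)
      + Xv * Yv * (Yv ^ (d+1) - Yv * (1 - Xv) ^ d)"
    by (simp add: algebra_simps power_add)
  finally show ?thesis .
qed

lemma GF2_rational:
  "GF2 d * ((1 - X2 - T2 * X2) * ((1 - T2 * X2) ^ d * (X2 - 1) + X2 ^ (d+1)))
     = X2 * (T2 * X2 ^ (d+1) + (1 - T2 * X2) ^ d * (X2 - 1))"
proof -
  define Q where "Q = (\<lambda>p. p mod (d+1) \<noteq> 1 mod (d+1))"
  let ?a = "1 - T2 * X2" and ?b = "1 - X2"
  have periodic: "Q (m + (d+1)) = Q m" for m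
    unfolding Q_def by (simp only: mod_add_self2)
  have factor_1: "euler_factor Q 1 = ?b"
    by (simp add: euler_factor_def Q_def X2_def)
  have factor_block: "euler_factor Q m = ?a" if "m \<in> {2..d+1}" for m
    using mod_period_ne_1[OF that] by (simp add: euler_factor_def Q_def T2_def X2_def)
  have "(1 - X2 - T2 * X2) * (?a ^ d * (X2 - 1) + X2 ^ (d+1))
      = (?b * ?a ^ d - X2 ^ (d+1)) * (X2 - ?a)"
    by (simp add: algebra_simps)
  moreover have "X2 * (GF2 d * ((?b * ?a ^ d - X2 ^ (d+1)) * (X2 - ?a)))
      = (1 - X2) * ((?b * ?a ^ d - ?a ^ (d+1)) * (X2 - ?a) + ?a * (X2 ^ (d+1) - ?a ^ (d+1)))
        - (?b * ?a ^ d - X2 ^ (d+1)) * (X2 - ?a)"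
    using arg_cong[OF gf_partitions_rational[where M = Q and d = d and a = ?a and b = ?b,
          OF periodic factor_1 factor_block], of fps_flatten]
    by (simp only: fps_flatten_mult fps_flatten_add fps_flatten_diff fps_flatten_power
        fps_flatten_const fps_flatten_X fps_flatten_one Q_def fps_flatten_gf_partitions_GF2
        X2_def mult.assoc)
  moreover have "\<dots> = X2 * (X2 * (T2 * X2 ^ (d+1) + ?a ^ d * (X2 - 1)))"
    by (simp add: algebra_simps power_add)
  moreover have "X2 \<noteq> 0"
    by (simp add: X2_def)
  ultimately show ?thesis
    by simp
qed

theorem lemma3p1:
  fixes d :: nat
  assumes "1 \<le> d"
  shows "GF3 d * (((1 - Tv * Xv) * (1 - Xv) ^ d - Yv ^ (d+1)) * (Xv + Yv - 1))
           = Tv * Xv * Yv * (1 - Xv) ^ d * (Xv + Yv - 1)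
             + Xv * Yv * (Yv ^ (d+1) - Yv * (1 - Xv) ^ d)
       \<and> GF2 d * ((1 - X2 - T2 * X2) * ((1 - T2 * X2) ^ d * (X2 - 1) + X2 ^ (d+1)))
           = X2 * (T2 * X2 ^ (d+1) + (1 - T2 * X2) ^ d * (X2 - 1))"
  using GF3_rational GF2_rational by blast

end
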